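(* Let $\Lambda=(0,+\infty)$ and let $\chi\colon\Lambda\to\mathbb{R}_+^d$ be a continuous bounded function with $\operatorname{supp}\chi=[\lambda_{\min},\lambda_{\max}]$, $0\le\lambda_{\min}<\lambda_{\max}<\infty$, and $\chi(\lambda)\neq\mathbf{0}$ for $\lambda\in(\lambda_{\min},\lambda_{\max})$; let $\eta=\chi/\langle\mathbf{1},\chi\rangle$ on $(\lambda_{\min},\lambda_{\max})$, assumed to extend continuously to $[\lambda_{\min},\lambda_{\max}]$. Let $\mathcal{P}=\{\int_\Lambda\chi\,\mathrm{d}\nu:\nu\text{ a finite nonnegative Borel measure on }\Lambda\}$ (assumed to have nonempty interior), $A=\{\mathbf{x}:\langle\mathbf{x},\mathbf{1}\rangle=1\}$, $\mathcal{T}=\mathcal{P}\cap A$ and $\bar{\mathcal{T}}$ its closure. Let $\mu$ be a finite nonnegative Borel measure on $\Lambda$ and $\tilde\mu=\langle\chi(\cdot),\mathbf{1}\rangle\mu$, and assume $\tilde\mu$ is atomless with $\operatorname{supp}\tilde\mu=[\lambda_{\min},\lambda_{\max}]$. Then for any matrix $P\in\mathbb{R}^{d\times n}$ with columns $\mathbf{c}_1,\dots,\mathbf{c}_n\in\bar{\mathcal{T}}$ and any $\varepsilon>0$ there exist disjoint closed sets $A_1,\dots,A_n\subset[\lambda_{\min},\lambda_{\max}]$ such that \[ \Bigl\|\mathbf{c}_i-\frac{1}{\tilde\mu(A_i)}\int_{A_i}\eta\,\mathrm{d}\tilde\mu\Bigr\|\le\varepsilon,\qquad 1\le i\le n. 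\]
   Context: $\mathbf{1}$ is the all-ones vector in $\mathbb{R}^d$; $\|\cdot\|$ is a norm on $\mathbb{R}^d$. *)

theory Defs
  imports "HOL-Probability.Probability"
begin

definition is_norm :: "('a::real_vector \<Rightarrow> real) \<Rightarrow> bool" where
  "is_norm N \<longleftrightarrow> (\<forall>x. 0 \<le> N x) \<and> (\<forall>x. N x = 0 \<longleftrightarrow> x = 0) \<and>
     (\<forall>a x. N (a *\<^sub>R x) = \<bar>a\<bar> * N x) \<and> (\<forall>x y. N (x + y) \<le> N x + N y)"

definition measure_support :: "real measure \<Rightarrow> real set" where
  "measure_support M = {x. \<forall>e>0. emeasure M (ball x e) > 0}"

text \<open>Finite nonnegative Borel measures on \<open>\<Lambda> = (0,\<infinity>)\<close>, represented as Borel measures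
  on the real line giving no mass to \<open>(-\<infinity>,0]\<close>.\<close>
definition fin_borel_on_Lambda :: "real measure \<Rightarrow> bool" where
  "fin_borel_on_Lambda \<nu> \<longleftrightarrow> sets \<nu> = sets borel \<and> finite_measure \<nu> \<and> emeasure \<nu> {..0} = 0"

definition cone_P :: "(real \<Rightarrow> real^'d) \<Rightarrow> (real^'d) set" where
  "cone_P chi = {x. \<exists>\<nu>. fin_borel_on_Lambda \<nu> \<and> set_integrable \<nu> {0<..} chi \<and>
                      x = set_lebesgue_integral \<nu> {0<..} chi}"

definition hyperplane_A :: "(real^'d) set" where
  "hyperplane_A = {x. (\<Sum>i\<in>UNIV. x $ i) = 1}"

definition tilde_measure :: "(real \<Rightarrow> real^'d) \<Rightarrow> real measure \<Rightarrow> real measure" where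
  "tilde_measure chi \<mu> = density \<mu> (\<lambda>l. ennreal (indicator {0<..} l * (\<Sum>i\<in>UNIV. chi l $ i)))"

end

theory Submission
  imports Defs
begin

text \<open>The closure of the slice \<open>cone_P chi \<inter> hyperplane_A\<close> lies in the convex hull of the compact
  curve \<open>\<eta> ` {lam_min..lam_max}\<close>: a point of the slice is the integral of
  \<open>chi = \<langle>\<one>, chi\<rangle> \<eta>\<close> against a measure for which \<open>\<langle>\<one>, chi\<rangle>\<close> has total mass one, so no
  hyperplane separates it from that hull. Cut \<open>{lam_min..lam_max}\<close> into cells on which \<open>\<eta>\<close> varies
  by less than a tolerance \<open>r\<close>; then every \<open>c i\<close> is within \<open>r\<close> of a convex combination
  \<open>\<Sum>k. v i k *\<^sub>R \<eta> (t k)\<close> of values at the cell centres. Since the weighted measure is atomless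
  and charges every cell, its distribution function is continuous, and the intermediate value
  theorem carves out of cell \<open>k\<close> disjoint closed intervals of masses \<open>\<theta> * v i k\<close>, \<open>i < n\<close>. The
  union \<open>A i\<close> of the intervals with index \<open>i\<close> has mass \<open>\<theta>\<close> and an \<open>\<eta>\<close>-average within \<open>r\<close> of
  \<open>\<Sum>k. v i k *\<^sub>R \<eta> (t k)\<close>. Finally, \<open>N\<close> is dominated by a multiple of the Euclidean norm.\<close>

lemma is_norm_sum_le:
  assumes "is_norm N"
  shows "N (\<Sum>i\<in>I. f i) \<le> (\<Sum>i\<in>I. N (f i))"
proof -
  have N0: "N 0 = 0" using assms unfolding is_norm_def by blast
  show ?thesis
  proof (induction I rule: infinite_finite_induct)
    case (insert x F)
    have "N (f x + sum f F) \<le> N (f x) + N (sum f F)"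
      using assms unfolding is_norm_def by blast
    with insert show ?case by simp
  qed (simp_all add: N0)
qed

lemma is_norm_le_const_norm:
  fixes N :: "'a::euclidean_space \<Rightarrow> real"
  assumes "is_norm N"
  shows "\<exists>C>0. \<forall>x. N x \<le> C * norm x"
proof (intro exI conjI allI)
  have N_nonneg: "0 \<le> N x" for x
    using assms unfolding is_norm_def by blast
  show "0 < (\<Sum>b\<in>Basis. N b) + 1"
    by (simp add: add_nonneg_pos sum_nonneg N_nonneg)
  fix x :: 'a
  have "N x = N (\<Sum>b\<in>Basis. (x \<bullet> b) *\<^sub>R b)"
    by (simp add: euclidean_representation)
  also have "\<dots> \<le> (\<Sum>b\<in>Basis. N ((x \<bullet> b) *\<^sub>R b))"
    by (rule is_norm_sum_le[OF assms])
  also have "\<dots> = (\<Sum>b\<in>Basis. \<bar>x \<bullet> b\<bar> * N b)"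
    using assms by (simp add: is_norm_def)
  also have "\<dots> \<le> (\<Sum>b\<in>Basis. norm x * N b)"
    by (intro sum_mono mult_right_mono Basis_le_norm N_nonneg)
  also have "\<dots> = norm x * (\<Sum>b\<in>Basis. N b)"
    by (simp add: sum_distrib_left)
  also have "\<dots> \<le> ((\<Sum>b\<in>Basis. N b) + 1) * norm x"
    by (simp add: algebra_simps)
  finally show "N x \<le> ((\<Sum>b\<in>Basis. N b) + 1) * norm x" .
qed

lemma convex_hull_image_weights:
  fixes g :: "'i \<Rightarrow> 'a::real_vector"
  assumes "finite I" "y \<in> convex hull (g ` I)"
  shows "\<exists>v. (\<forall>k\<in>I. 0 \<le> v k) \<and> sum v I = 1 \<and> (\<Sum>k\<in>I. v k *\<^sub>R g k) = y"
proof -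
  define W where "W = {y. \<exists>v. (\<forall>k\<in>I. 0 \<le> v k) \<and> sum v I = 1 \<and> (\<Sum>k\<in>I. v k *\<^sub>R g k) = y}"
  have "convex hull (g ` I) \<subseteq> W"
  proof (rule hull_minimal)
    show "g ` I \<subseteq> W"
    proof
      fix z assume "z \<in> g ` I"
      then obtain j where "j \<in> I" "z = g j" by blast
      moreover have "(\<Sum>k\<in>I. (if k = j then 1 else 0) *\<^sub>R g k) = g j"
        using \<open>j \<in> I\<close> assms(1) by (simp add: if_distrib[of "\<lambda>c. c *\<^sub>R _"] cong: if_cong)
      ultimately show "z \<in> W" unfolding W_def using assms(1)
        by (intro CollectI exI[of _ "\<lambda>k. if k = j then 1 else 0"]) auto
    qed
    show "convex W"
    proof (rule convexI)
      fix y1 y2 and s t :: real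
      assume "y1 \<in> W" "y2 \<in> W" and st: "0 \<le> s" "0 \<le> t" "s + t = 1"
      then obtain v1 v2 where
        v1: "\<forall>k\<in>I. 0 \<le> v1 k" "sum v1 I = 1" "(\<Sum>k\<in>I. v1 k *\<^sub>R g k) = y1" and
        v2: "\<forall>k\<in>I. 0 \<le> v2 k" "sum v2 I = 1" "(\<Sum>k\<in>I. v2 k *\<^sub>R g k) = y2"
        unfolding W_def by blast
      show "s *\<^sub>R y1 + t *\<^sub>R y2 \<in> W" unfolding W_def
        using v1 v2 st
        by (intro CollectI exI[of _ "\<lambda>k. s * v1 k + t * v2 k"])
           (auto simp: sum.distrib sum_distrib_left[symmetric] scaleR_add_left scaleR_sum_right)
    qed
  qed
  with assms(2) show ?thesis unfolding W_def by blast
qed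

lemma convex_hull_dist_le:
  fixes S T :: "'a::real_normed_vector set"
  assumes near: "\<And>x. x \<in> S \<Longrightarrow> \<exists>y\<in>T. dist x y \<le> r" and z: "z \<in> convex hull S"
  shows "\<exists>w\<in>convex hull T. dist z w \<le> r"
proof -
  define U where "U = (\<Union>w\<in>convex hull T. \<Union>e\<in>cball 0 r. {w + e})"
  have "convex hull S \<subseteq> U"
  proof (rule hull_minimal)
    show "S \<subseteq> U"
    proof
      fix x assume "x \<in> S"
      then obtain y where "y \<in> T" "dist x y \<le> r" using near by blast
      moreover have "x = y + (x - y)" by simp
      ultimately show "x \<in> U" unfolding U_def
        by (metis UN_I dist_norm hull_inc mem_cball_0 singletonI)
    qed
    show "convex U" unfolding U_def
      by (intro convex_sums convex_convex_hull convex_cball)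
  qed
  with z show ?thesis unfolding U_def by (force simp: dist_norm)
qed

lemma convex_hull_image_approx_weights:
  fixes g :: "'i \<Rightarrow> 'a::real_normed_vector" and c :: "nat \<Rightarrow> 'a"
  assumes "finite I" and near: "\<And>x. x \<in> S \<Longrightarrow> \<exists>k\<in>I. dist x (g k) \<le> r"
    and c: "\<And>i. i < n \<Longrightarrow> c i \<in> convex hull S"
  shows "\<exists>v. \<forall>i<n. (\<forall>k\<in>I. 0 \<le> v i k) \<and> sum (v i) I = 1 \<and> dist (c i) (\<Sum>k\<in>I. v i k *\<^sub>R g k) \<le> r"
proof -
  have near_image: "\<exists>y\<in>g ` I. dist x y \<le> r" if "x \<in> S" for x
    using near[OF that] by blast
  have "\<forall>i\<in>{..<n}. \<exists>v. (\<forall>k\<in>I. 0 \<le> v k) \<and> sum v I = 1 \<and> dist (c i) (\<Sum>k\<in>I. v k *\<^sub>R g k) \<le> r"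
  proof
    fix i assume "i \<in> {..<n}"
    then have "c i \<in> convex hull S" using c by simp
    then obtain w where w: "w \<in> convex hull (g ` I)" "dist (c i) w \<le> r"
      using convex_hull_dist_le[OF near_image] by blast
    then obtain v where "\<forall>k\<in>I. 0 \<le> v k" "sum v I = 1" "(\<Sum>k\<in>I. v k *\<^sub>R g k) = w"
      using convex_hull_image_weights[OF \<open>finite I\<close>] by blast
    with w show "\<exists>v. (\<forall>k\<in>I. 0 \<le> v k) \<and> sum v I = 1 \<and> dist (c i) (\<Sum>k\<in>I. v k *\<^sub>R g k) \<le> r"
      by blast
  qed
  from bchoice[OF this] obtain v
    where v: "\<forall>i\<in>{..<n}. (\<forall>k\<in>I. 0 \<le> v i k) \<and> sum (v i) I = 1 \<and> dist (c i) (\<Sum>k\<in>I. v i k *\<^sub>R g k) \<le> r"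
    by blast
  show ?thesis by (rule exI[of _ v]) (use v in auto)
qed

lemma grid_balls_disjoint:
  fixes a h :: real
  assumes "0 < h"
  shows "disjoint_family_on (\<lambda>k::nat. ball (a + (real k + 1/2) * h) (h/2)) I"
  unfolding disjoint_family_on_def
proof (intro ballI impI)
  fix k k' :: nat assume "k \<noteq> k'"
  let ?t = "\<lambda>k::nat. a + (real k + 1/2) * h"
  have "1 \<le> \<bar>real k - real k'\<bar>" using \<open>k \<noteq> k'\<close> by linarith
  then have "h \<le> \<bar>real k - real k'\<bar> * h" using assms mult_right_mono[of 1 _ h] by simp
  then have far: "h \<le> dist (?t k) (?t k')" unfolding dist_real_def using assms
    by (simp add: abs_mult flip: left_diff_distrib)
  show "ball (?t k) (h/2) \<inter> ball (?t k') (h/2) = {}"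
  proof (intro equalityI subsetI)
    fix x assume "x \<in> ball (?t k) (h/2) \<inter> ball (?t k') (h/2)"
    then have "dist (?t k) (?t k') < h"
      using dist_triangle_less_add[of "?t k" x "h/2" "?t k'" "h/2"] by (simp add: dist_commute)
    with far show "x \<in> {}" by simp
  qed simp
qed

lemma grid_centres_cover:
  fixes a h l :: real and m :: nat
  assumes "0 < h" "0 < m" "a \<le> l" "l \<le> a + m * h"
  shows "\<exists>k<m. dist l (a + (real k + 1/2) * h) \<le> h/2"
proof -
  define f where "f = (l - a) / h"
  have f: "0 \<le> f" "f \<le> m" using assms unfolding f_def by (auto simp: field_simps)
  define k where "k = min (nat \<lfloor>f\<rfloor>) (m - 1)"
  have "\<bar>f - (k + 1/2)\<bar> \<le> 1/2"
  proof (cases "nat \<lfloor>f\<rfloor> < m")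
    case True
    then have "k = nat \<lfloor>f\<rfloor>" unfolding k_def by simp
    then show ?thesis using f by linarith
  next
    case False
    then have "k = m - 1" "f = m" using f unfolding k_def by linarith+
    then show ?thesis using \<open>0 < m\<close> by (simp add: of_nat_diff)
  qed
  moreover have "dist l (a + (real k + 1/2) * h) = \<bar>f - (k + 1/2)\<bar> * h"
    using assms(1) unfolding f_def dist_real_def by (simp add: abs_mult_pos field_simps)
  ultimately have "dist l (a + (real k + 1/2) * h) \<le> 1/2 * h"
    using assms(1) by (metis mult_right_mono less_imp_le)
  moreover have "k < m" using \<open>0 < m\<close> unfolding k_def by simp
  ultimately show ?thesis by auto
qed

lemma convex_hull_curve_grid_approximation:
  fixes \<eta> :: "real \<Rightarrow> 'a::real_normed_vector" and c :: "nat \<Rightarrow> 'a"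
  assumes "a < b" and \<eta>: "continuous_on {a..b} \<eta>" and "0 < r"
    and c: "\<And>i. i < n \<Longrightarrow> c i \<in> convex hull (\<eta> ` {a..b})"
  shows "\<exists>(m::nat) t \<rho> v. 0 < \<rho> \<and> (\<forall>k<m. ball (t k) \<rho> \<subseteq> {a..b}) \<and>
           disjoint_family_on (\<lambda>k. ball (t k) \<rho>) {..<m} \<and>
           (\<forall>k<m. \<forall>x\<in>ball (t k) \<rho>. norm (\<eta> x - \<eta> (t k)) \<le> r) \<and>
           (\<forall>i<n. (\<forall>k<m. 0 \<le> v i k) \<and> sum (v i) {..<m} = 1 \<and>
                  norm (c i - (\<Sum>k<m. v i k *\<^sub>R \<eta> (t k))) \<le> r)"
proof -
  obtain \<delta> where "0 < \<delta>"
    and uc: "\<And>x y. x \<in> {a..b} \<Longrightarrow> y \<in> {a..b} \<Longrightarrow> dist y x < \<delta> \<Longrightarrow> dist (\<eta> y) (\<eta> x) < r"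
    using compact_uniformly_continuous[OF \<eta> compact_Icc] \<open>0 < r\<close>
    unfolding uniformly_continuous_on_def by metis
  obtain m :: nat where m: "(b - a) / \<delta> < m" using reals_Archimedean2 by blast
  then have "0 < m" using \<open>a < b\<close> \<open>0 < \<delta>\<close> by (smt (verit) divide_pos_pos of_nat_0_less_iff)
  define h where "h = (b - a) / m"
  have h: "0 < h" "h < \<delta>" "b = a + m * h"
    using \<open>a < b\<close> \<open>0 < \<delta>\<close> m \<open>0 < m\<close> by (auto simp: h_def field_simps)
  define t where "t k = a + (real k + 1/2) * h" for k :: nat
  have cells: "ball (t k) (h/2) \<subseteq> {a..b}" if "k < m" for k
  proof -
    have "(real k + 1) * h \<le> m * h" using that h by (intro mult_right_mono) auto
    moreover have "0 \<le> real k * h" using h by simp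
    moreover have "ball (t k) (h/2) = {a + real k * h<..<a + (real k + 1) * h}"
      unfolding ball_eq_greaterThanLessThan t_def by (simp add: algebra_simps)
    ultimately show ?thesis using h(3) by (auto simp del: of_nat_add)
  qed
  have near: "norm (\<eta> x - \<eta> (t k)) \<le> r" if "k < m" "x \<in> {a..b}" "dist x (t k) \<le> h/2" for k x
  proof -
    have "t k \<in> ball (t k) (h/2)" using h(1) by simp
    then have "t k \<in> {a..b}" using cells[OF that(1)] by blast
    moreover have "dist x (t k) < \<delta>" using that(3) h by linarith
    ultimately show ?thesis using uc[of "t k" x] that(2) by (simp add: dist_norm)
  qed
  have "\<exists>k\<in>{..<m}. dist x (\<eta> (t k)) \<le> r" if x: "x \<in> \<eta> ` {a..b}" for x
  proof -
    obtain l where l: "l \<in> {a..b}" "x = \<eta> l" using x by blast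
    then obtain k where "k < m" "dist l (t k) \<le> h/2"
      using grid_centres_cover[where a=a and l=l, OF h(1) \<open>0 < m\<close>] h(3) unfolding t_def by auto
    with near l show ?thesis by (auto simp: dist_norm)
  qed
  from convex_hull_image_approx_weights[where c=c and n=n, OF finite_lessThan this c]
  obtain v where "\<forall>i<n. (\<forall>k\<in>{..<m}. 0 \<le> v i k) \<and> sum (v i) {..<m} = 1 \<and>
      dist (c i) (\<Sum>k<m. v i k *\<^sub>R \<eta> (t k)) \<le> r"
    by blast
  moreover have "\<forall>k<m. \<forall>x\<in>ball (t k) (h/2). norm (\<eta> x - \<eta> (t k)) \<le> r"
  proof (intro allI impI ballI)
    fix k x assume "k < m" "x \<in> ball (t k) (h/2)"
    then have "x \<in> {a..b}" using cells by blast
    moreover have "dist x (t k) \<le> h/2" using \<open>x \<in> ball (t k) (h/2)\<close> by (simp add: dist_commute)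
    ultimately show "norm (\<eta> x - \<eta> (t k)) \<le> r" by (rule near[OF \<open>k < m\<close>])
  qed
  moreover have "disjoint_family_on (\<lambda>k. ball (t k) (h/2)) {..<m}"
    unfolding t_def by (rule grid_balls_disjoint[OF h(1)])
  ultimately have "0 < h/2 \<and> (\<forall>k<m. ball (t k) (h/2) \<subseteq> {a..b}) \<and>
      disjoint_family_on (\<lambda>k. ball (t k) (h/2)) {..<m} \<and>
      (\<forall>k<m. \<forall>x\<in>ball (t k) (h/2). norm (\<eta> x - \<eta> (t k)) \<le> r) \<and>
      (\<forall>i<n. (\<forall>k<m. 0 \<le> v i k) \<and> sum (v i) {..<m} = 1 \<and> norm (c i - (\<Sum>k<m. v i k *\<^sub>R \<eta> (t k))) \<le> r)"
    using cells h(1) by (auto simp: dist_norm)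
  then show ?thesis by blast
qed

lemma UN_disjoint_pieces:
  assumes "disjoint_family_on C K" "\<And>k. k \<in> K \<Longrightarrow> B k \<subseteq> C k" "\<And>k. k \<in> K \<Longrightarrow> B' k \<subseteq> C k"
    and "\<And>k. k \<in> K \<Longrightarrow> B k \<inter> B' k = {}"
  shows "(\<Union>k\<in>K. B k) \<inter> (\<Union>k\<in>K. B' k) = {}"
proof -
  have "B k \<inter> B' k' = {}" if "k \<in> K" "k' \<in> K" for k k'
  proof (cases "k = k'")
    case False
    then have "C k \<inter> C k' = {}" using assms(1) that unfolding disjoint_family_on_def by blast
    then show ?thesis using assms(2,3) that by blast
  qed (use assms(4) that in simp)
  then show ?thesis by blast
qed

lemma (in finite_measure) norm_set_integral_minus_scaleR_le:
  fixes f :: "'a \<Rightarrow> 'b::{banach, second_countable_topology}"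
  assumes f: "set_integrable M B f" and B: "B \<in> sets M"
    and close: "\<And>x. x \<in> B \<Longrightarrow> norm (f x - y) \<le> r"
  shows "norm (set_lebesgue_integral M B f - measure M B *\<^sub>R y) \<le> r * measure M B"
proof -
  have const: "set_integrable M B (\<lambda>_. c)" for c :: "'c::{banach, second_countable_topology}"
    unfolding set_integrable_def using B by (intro integrable_mult_indicator) auto
  have diff: "set_integrable M B (\<lambda>x. f x - y)"
    using f const by (rule set_integral_diff(1))
  have "set_lebesgue_integral M B f - measure M B *\<^sub>R y = (LINT x:B|M. f x - y)"
    using set_integral_diff(2)[OF f const] B by (simp add: set_integral_const)
  also have "norm \<dots> \<le> (LINT x:B|M. norm (f x - y))"
    using diff by (rule set_integral_norm_bound)
  also have "\<dots> \<le> (LINT x:B|M. r)"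
    using set_integrable_norm[OF diff] const close by (rule set_integral_mono)
  also have "\<dots> = r * measure M B"
    using B by (simp add: set_integral_const)
  finally show ?thesis .
qed

lemma (in finite_measure) norm_set_integral_UN_minus_sum_le:
  fixes f :: "'a \<Rightarrow> 'b::{banach, second_countable_topology}"
  assumes "finite I" "disjoint_family_on B I"
    and f: "\<And>k. k \<in> I \<Longrightarrow> set_integrable M (B k) f" and B: "\<And>k. k \<in> I \<Longrightarrow> B k \<in> sets M"
    and close: "\<And>k x. k \<in> I \<Longrightarrow> x \<in> B k \<Longrightarrow> norm (f x - y k) \<le> r"
  shows "norm (set_lebesgue_integral M (\<Union>k\<in>I. B k) f - (\<Sum>k\<in>I. measure M (B k) *\<^sub>R y k))
           \<le> r * (\<Sum>k\<in>I. measure M (B k))"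
proof -
  have "set_lebesgue_integral M (\<Union>k\<in>I. B k) f - (\<Sum>k\<in>I. measure M (B k) *\<^sub>R y k)
          = (\<Sum>k\<in>I. set_lebesgue_integral M (B k) f - measure M (B k) *\<^sub>R y k)"
    using assms by (simp add: set_integral_finite_Union sum_subtractf)
  also have "norm \<dots> \<le> (\<Sum>k\<in>I. r * measure M (B k))"
    using f B close
    by (intro order_trans[OF norm_sum] sum_mono norm_set_integral_minus_scaleR_le) auto
  finally show ?thesis by (simp add: sum_distrib_left)
qed

lemma (in finite_measure) set_average_UN_minus_convex_combination_le:
  fixes f :: "'a \<Rightarrow> 'b::{banach, second_countable_topology}"
  assumes "finite I" "disjoint_family_on B I"
    and f: "\<And>k. k \<in> I \<Longrightarrow> set_integrable M (B k) f" and B: "\<And>k. k \<in> I \<Longrightarrow> B k \<in> sets M"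
    and close: "\<And>k x. k \<in> I \<Longrightarrow> x \<in> B k \<Longrightarrow> norm (f x - y k) \<le> r"
    and mass: "\<And>k. k \<in> I \<Longrightarrow> measure M (B k) = \<theta> * v k" and "sum v I = 1" "0 < \<theta>"
  shows "measure M (\<Union>k\<in>I. B k) = \<theta>"
    and "norm ((1 / measure M (\<Union>k\<in>I. B k)) *\<^sub>R set_lebesgue_integral M (\<Union>k\<in>I. B k) f
               - (\<Sum>k\<in>I. v k *\<^sub>R y k)) \<le> r"
proof -
  have masses: "(\<Sum>k\<in>I. measure M (B k)) = \<theta>"
    using mass \<open>sum v I = 1\<close> by (simp add: sum_distrib_left[symmetric])
  then show measure: "measure M (\<Union>k\<in>I. B k) = \<theta>"
    using assms(1,2) B by (simp add: finite_measure_finite_Union subset_eq)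
  have "(\<Sum>k\<in>I. measure M (B k) *\<^sub>R y k) = \<theta> *\<^sub>R (\<Sum>k\<in>I. v k *\<^sub>R y k)"
    using mass by (simp add: scaleR_sum_right)
  moreover have "norm (set_lebesgue_integral M (\<Union>k\<in>I. B k) f - (\<Sum>k\<in>I. measure M (B k) *\<^sub>R y k))
      \<le> r * (\<Sum>k\<in>I. measure M (B k))"
    by (rule norm_set_integral_UN_minus_sum_le[OF assms(1,2)]) (use f B close in auto)
  ultimately have "norm (set_lebesgue_integral M (\<Union>k\<in>I. B k) f - \<theta> *\<^sub>R (\<Sum>k\<in>I. v k *\<^sub>R y k)) \<le> r * \<theta>"
    using masses by simp
  also have "set_lebesgue_integral M (\<Union>k\<in>I. B k) f - \<theta> *\<^sub>R (\<Sum>k\<in>I. v k *\<^sub>R y k)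
      = \<theta> *\<^sub>R ((1 / \<theta>) *\<^sub>R set_lebesgue_integral M (\<Union>k\<in>I. B k) f - (\<Sum>k\<in>I. v k *\<^sub>R y k))"
    using \<open>0 < \<theta>\<close> by (simp add: algebra_simps)
  finally show "norm ((1 / measure M (\<Union>k\<in>I. B k)) *\<^sub>R set_lebesgue_integral M (\<Union>k\<in>I. B k) f
               - (\<Sum>k\<in>I. v k *\<^sub>R y k)) \<le> r"
    using \<open>0 < \<theta>\<close> unfolding measure by (simp add: mult.commute)
qed

context finite_borel_measure
begin

lemma set_integrable_continuous_on_compact:
  fixes g :: "real \<Rightarrow> 'b::{banach, second_countable_topology}"
  assumes "compact B" "continuous_on B g"
  shows "set_integrable M B g"
proof -
  obtain C where C: "\<And>x. x \<in> B \<Longrightarrow> norm (g x) \<le> C"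
    using compact_imp_bounded[OF compact_continuous_image[OF assms(2,1)]] by (auto simp: bounded_iff)
  have "(\<lambda>x. indicator B x *\<^sub>R g x) \<in> borel_measurable borel"
    using assms by (intro borel_measurable_continuous_on_indicator) (auto intro: borel_closed compact_imp_closed)
  then have "(\<lambda>x. indicator B x *\<^sub>R g x) \<in> borel_measurable M"
    using M_is_borel measurable_cong_sets by blast
  moreover have "norm (indicator B x *\<^sub>R g x) \<le> max 0 C" for x
    using C by (cases "x \<in> B") (auto intro: max.coboundedI2)
  ultimately show ?thesis
    unfolding set_integrable_def by (intro integrable_const_bound) auto
qed

lemma measure_Icc_eq_cdf_diff:
  assumes atomless: "\<And>x. measure M {x} = 0" and "x \<le> y"
  shows "measure M {x..y} = cdf M y - cdf M x"
proof (cases "x = y")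
  case False
  with assms(2) have "x < y" by simp
  have "measure M {x..y} = measure M ({x} \<union> {x<..y})"
    using \<open>x \<le> y\<close> by (intro arg_cong[where f="measure M"]) auto
  also have "\<dots> = measure M {x} + measure M {x<..y}"
    by (rule finite_measure_Union) auto
  finally show ?thesis using cdf_diff_eq[OF \<open>x < y\<close>] atomless by simp
qed (simp add: atomless)

lemma measure_Ioo_eq_cdf_diff:
  assumes atomless: "\<And>x. measure M {x} = 0" and "x < y"
  shows "measure M {x<..<y} = cdf M y - cdf M x"
proof -
  have "measure M {x<..y} = measure M ({x<..<y} \<union> {y})"
    using \<open>x < y\<close> by (intro arg_cong[where f="measure M"]) auto
  also have "\<dots> = measure M {x<..<y} + measure M {y}"
    by (rule finite_measure_Union) auto
  finally show ?thesis using cdf_diff_eq[OF \<open>x < y\<close>] atomless by simp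
qed

text \<open>The \<open>i\<close>-th interval is carved out of the \<open>i\<close>-th of \<open>2n+1\<close> slots of equal mass, so
  consecutive intervals are separated by slots of positive mass.\<close>
lemma ordered_intervals_with_masses:
  fixes n :: nat and w :: "nat \<Rightarrow> real"
  assumes atomless: "\<And>x. measure M {x} = 0"
    and w_nonneg: "\<And>i. i < n \<Longrightarrow> 0 \<le> w i"
    and w_less: "\<And>i. i < n \<Longrightarrow> w i < measure M {a<..<b} / (2*n+1)"
  shows "\<exists>p q. \<forall>i<n. a < p i \<and> p i \<le> q i \<and> q i < b \<and> measure M {p i..q i} = w i \<and>
                   (\<forall>j<n. i < j \<longrightarrow> q i < p j)"
proof (cases "n = 0")
  case False
  define F where "F = cdf M"
  define h where "h = measure M {a<..<b} / (2*n+1)"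
  have "0 < n" using False by simp
  then have h: "0 < h" using w_nonneg[of 0] w_less[of 0] unfolding h_def by linarith
  have w_h: "w i < h" if "i < n" for i using w_less[OF that] unfolding h_def .
  from h have "a < b" unfolding h_def by (cases "a < b") auto
  then have Fb: "F b = F a + (2*n+1) * h"
    using measure_Ioo_eq_cdf_diff[OF atomless] unfolding F_def h_def by simp
  have F_cont: "continuous_on S F" for S
    unfolding F_def by (intro continuous_at_imp_continuous_on ballI) (simp add: isCont_cdf atomless)
  have slot: "\<exists>p q. a < p \<and> p \<le> q \<and> q < b \<and> F p = F a + (2*i+1) * h \<and> F q = F a + (2*i+1) * h + w i"
    if i: "i < n" for i
  proof -
    have "(2*i+1) * h + w i < (2*i+2) * h" using w_h[OF i] by (simp add: algebra_simps)
    also have "\<dots> \<le> 2*n * h" using i h by (intro mult_right_mono) auto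
    finally have below: "(2*i+1) * h + w i < (2*n+1) * h" using h by (simp add: algebra_simps)
    have above: "0 < (2*i+1) * h" using h by simp
    obtain p where p: "a \<le> p" "p \<le> b" "F p = F a + (2*i+1) * h"
      using IVT'[of F a "F a + (2*i+1) * h" b] \<open>a < b\<close> F_cont below above w_nonneg[OF i] Fb by auto
    obtain q where q: "p \<le> q" "q \<le> b" "F q = F a + (2*i+1) * h + w i"
      using IVT'[of F p "F a + (2*i+1) * h + w i" b] p F_cont below w_nonneg[OF i] Fb by auto
    have "a \<noteq> p" "q \<noteq> b" using p q above below Fb by auto
    with p q show ?thesis by (intro exI[of _ p] exI[of _ q]) auto
  qed
  then obtain p q where pq: "\<forall>i<n. a < p i \<and> p i \<le> q i \<and> q i < b \<and> F (p i) = F a + (2*i+1) * h \<and>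
                                   F (q i) = F a + (2*i+1) * h + w i"
    by metis
  have "q i < p j" if ij: "i < n" "j < n" "i < j" for i j
  proof -
    have "(2*i+2) * h \<le> (2*j+1) * h" using ij h by (intro mult_right_mono) auto
    then have "F (q i) < F (p j)" using pq ij w_h[of i] by (simp add: algebra_simps)
    then show ?thesis using cdf_nondecreasing unfolding F_def by (meson not_le)
  qed
  moreover have "measure M {p i..q i} = w i" if "i < n" for i
    using pq that measure_Icc_eq_cdf_diff[OF atomless, of "p i" "q i"] unfolding F_def by auto
  ultimately show ?thesis using pq by blast
qed simp

lemma closed_subsets_with_proportional_masses:
  fixes n m :: nat and v :: "nat \<Rightarrow> nat \<Rightarrow> real"
  assumes atomless: "\<And>x. measure M {x} = 0"
    and pos: "\<And>k. k < m \<Longrightarrow> 0 < measure M (ball (t k) \<rho>)"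
    and v: "\<And>i k. i < n \<Longrightarrow> k < m \<Longrightarrow> v i k \<in> {0..1}"
  shows "\<exists>\<theta>>0. \<exists>B. \<forall>i<n. \<forall>k<m. closed (B i k) \<and> B i k \<subseteq> ball (t k) \<rho> \<and>
           measure M (B i k) = \<theta> * v i k \<and> (\<forall>j<n. j \<noteq> i \<longrightarrow> B i k \<inter> B j k = {})"
proof -
  define \<alpha> where "\<alpha> k = t k - \<rho>" for k
  define \<beta> where "\<beta> k = t k + \<rho>" for k
  have cell_eq: "ball (t k) \<rho> = {\<alpha> k<..<\<beta> k}" for k
    unfolding \<alpha>_def \<beta>_def by (rule ball_eq_greaterThanLessThan)
  note pos = pos[unfolded cell_eq]
  define \<theta> where "\<theta> = Min (insert 1 ((\<lambda>k. measure M {\<alpha> k<..<\<beta> k} / (2*n+2)) ` {..<m}))"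
  have \<theta>: "0 < \<theta>" unfolding \<theta>_def using pos by auto
  have "\<exists>p q. \<forall>i<n. \<alpha> k < p i \<and> p i \<le> q i \<and> q i < \<beta> k \<and> measure M {p i..q i} = \<theta> * v i k \<and>
                   (\<forall>j<n. i < j \<longrightarrow> q i < p j)" if k: "k < m" for k
  proof (rule ordered_intervals_with_masses[OF atomless])
    fix i assume i: "i < n"
    show "0 \<le> \<theta> * v i k" using \<theta> v[OF i k] by simp
    have "\<theta> * v i k \<le> \<theta>" using \<theta> v[OF i k] by (simp add: mult_left_le)
    also have "\<dots> \<le> measure M {\<alpha> k<..<\<beta> k} / (2*n+2)"
      unfolding \<theta>_def using k by (intro Min_le) auto
    also have "\<dots> < measure M {\<alpha> k<..<\<beta> k} / (2*n+1)"
      using pos[OF k] by (intro divide_strict_left_mono) auto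
    finally show "\<theta> * v i k < measure M {\<alpha> k<..<\<beta> k} / (2*n+1)" .
  qed
  then obtain p q where pq: "\<forall>k<m. \<forall>i<n. \<alpha> k < p k i \<and> p k i \<le> q k i \<and> q k i < \<beta> k \<and>
      measure M {p k i..q k i} = \<theta> * v i k \<and> (\<forall>j<n. i < j \<longrightarrow> q k i < p k j)"
    by metis
  define B where "B i k = {p k i..q k i}" for i k
  have "B i k \<inter> B j k = {}" if "k < m" "i < n" "j < n" "i \<noteq> j" for i j k
  proof -
    have sep: "q k i' < p k j'" if "i' < n" "j' < n" "i' < j'" for i' j'
      using pq \<open>k < m\<close> that by blast
    from \<open>i \<noteq> j\<close> consider "i < j" | "j < i" by linarith
    then have "q k i < p k j \<or> q k j < p k i"
      using sep \<open>i < n\<close> \<open>j < n\<close> by cases auto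
    then show ?thesis unfolding B_def by auto
  qed
  moreover have "B i k \<subseteq> {\<alpha> k<..<\<beta> k}" "measure M (B i k) = \<theta> * v i k" if "k < m" "i < n" for i k
  proof -
    have "\<alpha> k < p k i" "q k i < \<beta> k" "measure M {p k i..q k i} = \<theta> * v i k"
      using pq that by auto
    then show "B i k \<subseteq> {\<alpha> k<..<\<beta> k}" "measure M (B i k) = \<theta> * v i k"
      unfolding B_def by auto
  qed
  ultimately have "\<forall>i<n. \<forall>k<m. closed (B i k) \<and> B i k \<subseteq> ball (t k) \<rho> \<and>
      measure M (B i k) = \<theta> * v i k \<and> (\<forall>j<n. j \<noteq> i \<longrightarrow> B i k \<inter> B j k = {})"
    unfolding cell_eq B_def by auto
  with \<theta> show ?thesis by blast
qed

lemma averages_approximate_convex_hull: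
  fixes \<eta> :: "real \<Rightarrow> 'a::euclidean_space" and c :: "nat \<Rightarrow> 'a" and n :: nat
  assumes atomless: "\<And>x. measure M {x} = 0"
    and support: "\<And>t e. t \<in> {a..b} \<Longrightarrow> 0 < e \<Longrightarrow> 0 < measure M (ball t e)"
    and "a < b" and \<eta>: "continuous_on {a..b} \<eta>"
    and c: "\<And>i. i < n \<Longrightarrow> c i \<in> convex hull (\<eta> ` {a..b})"
    and "0 < r"
  shows "\<exists>A. (\<forall>i<n. closed (A i) \<and> A i \<subseteq> {a..b}) \<and> (\<forall>i<n. \<forall>j<n. i \<noteq> j \<longrightarrow> A i \<inter> A j = {}) \<and>
             (\<forall>i<n. 0 < measure M (A i) \<and>
                    norm (c i - (1 / measure M (A i)) *\<^sub>R set_lebesgue_integral M (A i) \<eta>) \<le> r)"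
proof -
  obtain m :: nat and t \<rho> v where "0 < \<rho>" and cells: "\<forall>k<m. ball (t k) \<rho> \<subseteq> {a..b}"
    and cells_disj: "disjoint_family_on (\<lambda>k. ball (t k) \<rho>) {..<m}"
    and near: "\<forall>k<m. \<forall>x\<in>ball (t k) \<rho>. norm (\<eta> x - \<eta> (t k)) \<le> r/2"
    and v: "\<forall>i<n. (\<forall>k<m. 0 \<le> v i k) \<and> sum (v i) {..<m} = 1 \<and>
                   norm (c i - (\<Sum>k<m. v i k *\<^sub>R \<eta> (t k))) \<le> r/2"
    using convex_hull_curve_grid_approximation[where c=c and n=n, OF \<open>a < b\<close> \<eta> half_gt_zero[OF \<open>0 < r\<close>] c]
    by blast
  have pos: "0 < measure M (ball (t k) \<rho>)" if "k < m" for k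
    using support cells that \<open>0 < \<rho>\<close> by (meson centre_in_ball subsetD)
  have v01: "v i k \<in> {0..1}" if "i < n" "k < m" for i k
    using that v member_le_sum[of k "{..<m}" "v i"] by auto
  from closed_subsets_with_proportional_masses[where t=t and \<rho>=\<rho> and v=v, OF atomless pos v01]
  obtain \<theta> B where "0 < \<theta>" and B: "\<forall>i<n. \<forall>k<m. closed (B i k) \<and> B i k \<subseteq> ball (t k) \<rho> \<and>
      measure M (B i k) = \<theta> * v i k \<and> (\<forall>j<n. j \<noteq> i \<longrightarrow> B i k \<inter> B j k = {})"
    by blast
  have B_sub: "B i k \<subseteq> {a..b}" if "i < n" "k < m" for i k
    using B cells that by blast
  define A where "A i = (\<Union>k\<in>{..<m}. B i k)" for i
  have average: "measure M (A i) = \<theta> \<and>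
      norm ((1 / measure M (A i)) *\<^sub>R set_lebesgue_integral M (A i) \<eta> - (\<Sum>k<m. v i k *\<^sub>R \<eta> (t k))) \<le> r/2"
    if i: "i < n" for i
  proof -
    have "compact (B i k)" if "k < m" for k
      using B B_sub[OF i that] i that by (metis closed_Int_compact compact_Icc inf.absorb1)
    then have integrable: "set_integrable M (B i k) \<eta>" if "k \<in> {..<m}" for k
      using that by (intro set_integrable_continuous_on_compact continuous_on_subset[OF \<eta> B_sub[OF i]]) auto
    have sets: "B i k \<in> sets M" if "k \<in> {..<m}" for k
      using B i that by (auto intro: borel_closed)
    have disjoint: "disjoint_family_on (B i) {..<m}"
      using cells_disj B i unfolding disjoint_family_on_def by blast
    have mass: "measure M (B i k) = \<theta> * v i k" if "k \<in> {..<m}" for k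
      using B i that by auto
    have close: "norm (\<eta> x - \<eta> (t k)) \<le> r/2" if "k \<in> {..<m}" "x \<in> B i k" for k x
      using near B i that by blast
    show ?thesis unfolding A_def
      using set_average_UN_minus_convex_combination_le[where y="\<lambda>k. \<eta> (t k)",
          OF finite_lessThan disjoint integrable sets close mass _ \<open>0 < \<theta>\<close>] v i
      by blast
  qed
  show ?thesis
  proof (intro exI[of _ A] conjI allI impI)
    fix i assume i: "i < n"
    show "closed (A i)" unfolding A_def using B i by (intro closed_UN) auto
    show "A i \<subseteq> {a..b}" unfolding A_def using B_sub[OF i] by blast
    show "0 < measure M (A i)" using average[OF i] \<open>0 < \<theta>\<close> by simp
    let ?avg = "(1 / measure M (A i)) *\<^sub>R set_lebesgue_integral M (A i) \<eta>"
      and ?comb = "\<Sum>k<m. v i k *\<^sub>R \<eta> (t k)"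
    have "norm (c i - ?avg) \<le> norm (c i - ?comb) + norm (?avg - ?comb)"
      using dist_triangle2[of "c i" ?avg ?comb] by (simp add: dist_norm)
    moreover have "norm (c i - ?comb) \<le> r/2" using v i by blast
    ultimately show "norm (c i - ?avg) \<le> r"
      using conjunct2[OF average[OF i]] by linarith
  next
    fix i j assume "i < n" "j < n" "i \<noteq> j"
    then show "A i \<inter> A j = {}"
      unfolding A_def using B by (intro UN_disjoint_pieces[OF cells_disj]) auto
  qed
qed

end

lemma integral_mem_closed_convex:
  fixes f :: "'b \<Rightarrow> 'a::euclidean_space"
  assumes S: "convex S" "closed S" and f: "integrable \<nu> f"
    and nonneg: "\<And>l. 0 \<le> inner u (f l)"
    and direction: "\<And>l. \<exists>y\<in>S. f l = inner u (f l) *\<^sub>R y"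
    and normalized: "inner u (integral\<^sup>L \<nu> f) = 1"
  shows "integral\<^sup>L \<nu> f \<in> S"
proof (rule ccontr)
  assume "integral\<^sup>L \<nu> f \<notin> S"
  then obtain a \<beta> where sep: "inner a (integral\<^sup>L \<nu> f) < \<beta>" "\<And>y. y \<in> S \<Longrightarrow> \<beta> < inner a y"
    using separating_hyperplane_closed_point[OF S] by blast
  have "\<beta> * inner u (f l) \<le> inner a (f l)" for l
  proof -
    obtain y where y: "y \<in> S" "f l = inner u (f l) *\<^sub>R y" using direction by blast
    then have "inner a (f l) = inner u (f l) * inner a y" by (metis inner_scaleR_right)
    with mult_right_mono[OF less_imp_le[OF sep(2)[OF y(1)]] nonneg[of l]] show ?thesis
      by (simp add: mult.commute)
  qed
  then have "(\<integral>l. \<beta> * inner u (f l) \<partial>\<nu>) \<le> (\<integral>l. inner a (f l) \<partial>\<nu>)"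
    using f by (intro integral_mono) auto
  then have "\<beta> \<le> inner a (integral\<^sup>L \<nu> f)"
    using f normalized by simp
  with sep(1) show False by simp
qed

lemma continuous_on_vanishes_outside_support:
  fixes f :: "'a::topological_space \<Rightarrow> 'b::{t1_space, zero}"
  assumes "continuous_on S f" "open S" "x \<in> S" "x \<notin> interior (closure {y\<in>S. f y \<noteq> 0})"
  shows "f x = 0"
proof (rule ccontr)
  assume "f x \<noteq> 0"
  have "S \<inter> f -` (- {0}) \<subseteq> closure {y\<in>S. f y \<noteq> 0}"
    using closure_subset[of "{y\<in>S. f y \<noteq> 0}"] by auto
  moreover have "open (S \<inter> f -` (- {0}))"
    using assms(1,2) open_Compl[OF closed_singleton] by (rule continuous_open_preimage)
  ultimately have "S \<inter> f -` (- {0}) \<subseteq> interior (closure {y\<in>S. f y \<noteq> 0})"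
    by (rule interior_maximal)
  moreover have "x \<in> S \<inter> f -` (- {0})"
    using assms(3) \<open>f x \<noteq> 0\<close> by simp
  ultimately show False using assms(4) by blast
qed

lemma sum_components_pos:
  fixes z :: "real^'d"
  assumes "\<forall>i. 0 \<le> z $ i" "z \<noteq> 0"
  shows "0 < (\<Sum>i\<in>UNIV. z $ i)"
proof -
  obtain i where "z $ i \<noteq> 0" using assms(2) by (auto simp: vec_eq_iff)
  moreover have "z $ i \<le> (\<Sum>j\<in>UNIV. z $ j)"
    using assms(1) by (intro member_le_sum) auto
  ultimately show ?thesis using assms(1) by (metis order.not_eq_order_implies_strict order.strict_trans2)
qed

lemma closure_cone_P_inter_hyperplane_A_subset:
  fixes chi \<eta> :: "real \<Rightarrow> real^'d"
  assumes chi_cont: "continuous_on {0<..} chi"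
    and chi_nonneg: "\<forall>l>0. \<forall>i. 0 \<le> chi l $ i"
    and chi_supp: "closure {l\<in>{0<..}. chi l \<noteq> 0} = {lam_min..lam_max}"
    and chi_nz: "\<forall>l\<in>{lam_min<..<lam_max}. chi l \<noteq> 0"
    and eta_cont: "continuous_on {lam_min..lam_max} \<eta>"
    and eta_def: "\<forall>l\<in>{lam_min<..<lam_max}. \<eta> l = (1 / (\<Sum>i\<in>UNIV. chi l $ i)) *\<^sub>R chi l"
    and "lam_min \<le> lam_max"
  shows "closure (cone_P chi \<inter> hyperplane_A) \<subseteq> convex hull (\<eta> ` {lam_min..lam_max})"
proof (rule closure_minimal)
  define S where "S = convex hull (\<eta> ` {lam_min..lam_max})"
  show "closed S" unfolding S_def
    by (intro compact_imp_closed compact_convex_hull compact_continuous_image eta_cont compact_Icc)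
  define one :: "real^'d" where "one = (\<chi> i. 1)"
  have inner_one: "inner one z = (\<Sum>i\<in>UNIV. z $ i)" for z
    unfolding one_def inner_vec_def by simp
  define f where "f = (\<lambda>l. indicator {0<..} l *\<^sub>R chi l)"
  have f_nonneg: "0 \<le> inner one (f l)" for l
    using chi_nonneg by (simp add: f_def inner_one indicator_def sum_nonneg)
  have direction: "\<exists>y\<in>S. f l = inner one (f l) *\<^sub>R y" for l
  proof (cases "0 < l \<and> l \<in> {lam_min<..<lam_max}")
    case True
    then have "0 < inner one (f l)"
      using sum_components_pos[of "chi l"] chi_nonneg chi_nz by (simp add: f_def inner_one)
    then have "f l = inner one (f l) *\<^sub>R \<eta> l"
      using True eta_def by (simp add: f_def inner_one)
    moreover have "\<eta> l \<in> S" unfolding S_def using True by (intro hull_inc imageI) auto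
    ultimately show ?thesis by blast
  next
    case False
    have "chi l = 0" if "0 < l"
    proof (rule continuous_on_vanishes_outside_support[OF chi_cont])
      show "l \<notin> interior (closure {l \<in> {0<..}. chi l \<noteq> 0})"
        using False that unfolding chi_supp by simp
    qed (use that in auto)
    then have "f l = 0" by (cases "0 < l") (simp_all add: f_def)
    moreover have "\<eta> lam_min \<in> S" unfolding S_def using \<open>lam_min \<le> lam_max\<close> by (intro hull_inc imageI) auto
    ultimately show ?thesis by auto
  qed
  show "cone_P chi \<inter> hyperplane_A \<subseteq> S"
  proof
    fix x assume "x \<in> cone_P chi \<inter> hyperplane_A"
    then obtain \<nu> where int: "set_integrable \<nu> {0<..} chi" and x: "x = set_lebesgue_integral \<nu> {0<..} chi"
      and sum_x: "(\<Sum>i\<in>UNIV. x $ i) = 1"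
      unfolding cone_P_def hyperplane_A_def by blast
    have "integrable \<nu> f" using int unfolding set_integrable_def f_def .
    moreover have x_eq: "x = integral\<^sup>L \<nu> f" using x unfolding set_lebesgue_integral_def f_def .
    moreover have "inner one (integral\<^sup>L \<nu> f) = 1"
      using sum_x x_eq by (simp add: inner_one)
    ultimately show "x \<in> S"
      using integral_mem_closed_convex[OF _ \<open>closed S\<close> _ f_nonneg direction] by (simp add: S_def)
  qed
qed

lemma finite_borel_measure_tilde_measure:
  fixes chi :: "real \<Rightarrow> real^'d"
  assumes mu: "fin_borel_on_Lambda \<mu>"
    and chi_cont: "continuous_on {0<..} chi" and chi_bdd: "bounded (chi ` {0<..})"
  shows "finite_borel_measure (tilde_measure chi \<mu>)"
proof -
  have sets_mu: "sets \<mu> = sets borel" and "finite_measure \<mu>"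
    using mu unfolding fin_borel_on_Lambda_def by auto
  then have space_mu: "space \<mu> = UNIV" by (metis sets_eq_imp_space_eq space_borel)
  define g where "g l = indicator {0<..} l * (\<Sum>i\<in>UNIV. chi l $ i)" for l
  obtain C where "0 < C" and C: "\<And>l. 0 < l \<Longrightarrow> norm (chi l) \<le> C"
    using chi_bdd unfolding bounded_pos by auto
  have "(\<lambda>l. indicator {0<..} l *\<^sub>R chi l) \<in> borel_measurable borel"
    using chi_cont by (intro borel_measurable_continuous_on_indicator) auto
  then have "(\<lambda>l. \<Sum>i\<in>UNIV. (indicator {0<..} l *\<^sub>R chi l) $ i) \<in> borel_measurable borel"
    by (intro borel_measurable_sum) (rule measurable_compose[OF _ borel_measurable_nth])
  moreover have "g = (\<lambda>l. \<Sum>i\<in>UNIV. (indicator {0<..} l *\<^sub>R chi l) $ i)"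
    by (auto simp: g_def indicator_def fun_eq_iff)
  ultimately have "g \<in> borel_measurable borel" by simp
  then have "g \<in> borel_measurable \<mu>"
    using measurable_cong_sets[OF sets_mu refl] by blast
  then have g_meas: "(\<lambda>l. ennreal (g l)) \<in> borel_measurable \<mu>"
    by measurable
  have g_le: "g l \<le> CARD('d) * C" for l
  proof (cases "0 < l")
    case True
    have "(\<Sum>i\<in>UNIV. chi l $ i) \<le> (\<Sum>i\<in>(UNIV::'d set). C)"
      using C[OF True] by (intro sum_mono) (meson abs_le_D1 component_le_norm_cart order_trans)
    with True show ?thesis by (simp add: g_def)
  next
    case False
    then show ?thesis using \<open>0 < C\<close> by (simp add: g_def)
  qed
  have "emeasure (tilde_measure chi \<mu>) UNIV = (\<integral>\<^sup>+ l. ennreal (g l) * indicator UNIV l \<partial>\<mu>)"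
    unfolding tilde_measure_def g_def[symmetric]
    by (rule emeasure_density[OF g_meas]) (metis sets.top space_mu)
  also have "\<dots> = (\<integral>\<^sup>+ l. ennreal (g l) \<partial>\<mu>)" by simp
  also have "\<dots> \<le> (\<integral>\<^sup>+ l. ennreal (CARD('d) * C) \<partial>\<mu>)"
    using g_le by (intro nn_integral_mono ennreal_leI)
  also have "\<dots> < \<infinity>"
    using finite_measure.emeasure_finite[OF \<open>finite_measure \<mu>\<close>] space_mu
    by (simp add: ennreal_mult_less_top less_top)
  finally have "emeasure (tilde_measure chi \<mu>) (space (tilde_measure chi \<mu>)) \<noteq> \<infinity>"
    by (simp add: tilde_measure_def space_mu)
  then have "finite_measure (tilde_measure chi \<mu>)"
    by (rule finite_measureI)
  moreover have "sets (tilde_measure chi \<mu>) = sets borel"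
    using sets_mu by (simp add: tilde_measure_def)
  ultimately show ?thesis
    by (simp add: finite_borel_measure_def finite_borel_measure_axioms_def)
qed

theorem proposition2:
  fixes chi :: "real \<Rightarrow> real^'d"
    and \<eta> :: "real \<Rightarrow> real^'d"
    and lam_min lam_max :: real
    and \<mu> :: "real measure"
    and N :: "real^'d \<Rightarrow> real"
    and n :: nat
    and c :: "nat \<Rightarrow> real^'d"
    and \<epsilon> :: real
  assumes norm: "is_norm N"
    and chi_cont: "continuous_on {0<..} chi"
    and chi_bdd: "bounded (chi ` {0<..})"
    and chi_nonneg: "\<forall>l>0. \<forall>i. 0 \<le> chi l $ i"
    and lam: "0 \<le> lam_min" "lam_min < lam_max"
    and chi_supp: "closure {l\<in>{0<..}. chi l \<noteq> 0} = {lam_min..lam_max}"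
    and chi_nz: "\<forall>l\<in>{lam_min<..<lam_max}. chi l \<noteq> 0"
    and eta_cont: "continuous_on {lam_min..lam_max} \<eta>"
    and eta_def: "\<forall>l\<in>{lam_min<..<lam_max}. \<eta> l = (1 / (\<Sum>i\<in>UNIV. chi l $ i)) *\<^sub>R chi l"
    and P_int: "interior (cone_P chi) \<noteq> {}"
    and mu: "fin_borel_on_Lambda \<mu>"
    and atomless: "\<forall>x. emeasure (tilde_measure chi \<mu>) {x} = 0"
    and mu_supp: "measure_support (tilde_measure chi \<mu>) = {lam_min..lam_max}"
    and cols: "\<forall>i<n. c i \<in> closure (cone_P chi \<inter> hyperplane_A)"
    and eps: "\<epsilon> > 0"
  shows "\<exists>A :: nat \<Rightarrow> real set.
           (\<forall>i<n. closed (A i) \<and> A i \<subseteq> {lam_min..lam_max}) \<and>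
           (\<forall>i<n. \<forall>j<n. i \<noteq> j \<longrightarrow> A i \<inter> A j = {}) \<and>
           (\<forall>i<n. measure (tilde_measure chi \<mu>) (A i) > 0 \<and>
              N (c i - (1 / measure (tilde_measure chi \<mu>) (A i)) *\<^sub>R
                        (set_lebesgue_integral (tilde_measure chi \<mu>) (A i) \<eta>)) \<le> \<epsilon>)"
proof -
  let ?M = "tilde_measure chi \<mu>"
  interpret finite_borel_measure ?M
    using mu chi_cont chi_bdd by (rule finite_borel_measure_tilde_measure)
  have "measure ?M {x} = 0" for x
    using atomless by (simp add: measure_def)
  moreover have "0 < measure ?M (ball t e)" if "t \<in> {lam_min..lam_max}" "0 < e" for t e
    using mu_supp that unfolding measure_support_def by (auto simp: emeasure_eq_measure)
  moreover have "closure (cone_P chi \<inter> hyperplane_A) \<subseteq> convex hull (\<eta> ` {lam_min..lam_max})"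
    using lam(2) by (intro closure_cone_P_inter_hyperplane_A_subset[OF chi_cont chi_nonneg chi_supp chi_nz
        eta_cont eta_def]) simp
  then have "c i \<in> convex hull (\<eta> ` {lam_min..lam_max})" if "i < n" for i
    using cols that by blast
  moreover obtain C where C: "0 < C" "\<And>x. N x \<le> C * norm x"
    using is_norm_le_const_norm[OF norm] by blast
  ultimately obtain A where A: "\<forall>i<n. closed (A i) \<and> A i \<subseteq> {lam_min..lam_max}"
      "\<forall>i<n. \<forall>j<n. i \<noteq> j \<longrightarrow> A i \<inter> A j = {}"
      "\<forall>i<n. 0 < measure ?M (A i) \<and>
              norm (c i - (1 / measure ?M (A i)) *\<^sub>R set_lebesgue_integral ?M (A i) \<eta>) \<le> \<epsilon> / C"
    using averages_approximate_convex_hull[OF _ _ lam(2) eta_cont, where c=c and n=n and r="\<epsilon> / C"] eps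
    by auto
  let ?avg = "\<lambda>i. (1 / measure ?M (A i)) *\<^sub>R set_lebesgue_integral ?M (A i) \<eta>"
  have N_le: "N (c i - ?avg i) \<le> \<epsilon>" if "i < n" for i
  proof -
    have "C * norm (c i - ?avg i) \<le> \<epsilon>"
      using A(3) that C(1) by (simp add: pos_le_divide_eq mult.commute)
    then show ?thesis using C(2) order_trans by blast
  qed
  show ?thesis by (rule exI[of _ A]) (use A N_le in blast)
qed

end
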